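(* Let $G=PSL_2(\mathbb R)\times PSL_2(\mathbb R)$ and $H=\{(x,x):x\in PSL_2(\mathbb R)\}$. For every $\lambda\in\mathbb R\setminus\{0,1\}$ the set $\{(\exp X,\exp(\lambda X)):X\in sl_2(\mathbb R)\}\subseteq G$ (the exponential image of $\mathbf m_\lambda=\{(X,\lambda X):X\in sl_2(\mathbb R)\}$) is not the image $\sigma(G/H)$ of a global sharply transitive section $\sigma:G/H\to G$.
   Context: A section $\sigma:G/H\to G$ with $\sigma(H)=1$ is sharply transitive if $\sigma(G/H)$ is a set of representatives of the left cosets of $H$ and for any cosets $aH,bH$ there is exactly one $z\in\sigma(G/H)$ with $zaH=bH$. Here $\exp$ denotes the exponential map $sl_2(\mathbb R)\to SL_2(\mathbb R)$ followed by the projection to $PSL_2(\mathbb R)$. The subspaces $\mathbf m_\lambda$, $\lambda\in\mathbb R\setminus\{0,1\}$, are complements to the diagonal Lie algebra $\mathbf h=\{(X,X)\}$ in $sl_2(\mathbb R)\oplus sl_2(\mathbb R)$ satisfying $[\mathbf h,\mathbf m_\lambda]\subseteq\mathbf m_\lambda$. *)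

theory Defs
  imports "HOL-Analysis.Analysis" "HOL-Algebra.Left_Coset"
begin

type_synonym mat2 = "real^2^2"

primrec mpow :: "mat2 \<Rightarrow> nat \<Rightarrow> mat2" where
  "mpow X 0 = mat 1"
| "mpow X (Suc n) = X ** mpow X n"

definition mexp :: "mat2 \<Rightarrow> mat2" where
  "mexp X = (\<Sum>n. (1 / fact n) *\<^sub>R mpow X n)"

definition SL2 :: "mat2 set" where
  "SL2 = {A. det A = 1}"

definition sl2 :: "mat2 set" where
  "sl2 = {X. trace X = 0}"

text \<open>Elements of PSL_2(R) = SL_2(R)/{+-1} are represented as the classes {A, -A}.\<close>
definition psl_class :: "mat2 \<Rightarrow> mat2 set" where
  "psl_class A = {A, - A}"

definition PSL2 :: "mat2 set monoid" where
  "PSL2 = \<lparr>carrier = psl_class ` SL2,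
           mult = (\<lambda>P Q. {A ** B | A B. A \<in> P \<and> B \<in> Q}),
           one = psl_class (mat 1)\<rparr>"

definition pexp :: "mat2 \<Rightarrow> mat2 set" where
  "pexp X = psl_class (mexp X)"

definition GG :: "(mat2 set \<times> mat2 set) monoid" where
  "GG = PSL2 \<times>\<times> PSL2"

definition HH :: "(mat2 set \<times> mat2 set) set" where
  "HH = {(x, x) | x. x \<in> carrier PSL2}"

definition sharply_transitive_section ::
  "('a, 'b) monoid_scheme \<Rightarrow> 'a set \<Rightarrow> ('a set \<Rightarrow> 'a) \<Rightarrow> bool" where
  "sharply_transitive_section G H \<sigma> \<longleftrightarrow>
     (\<forall>C \<in> lcosets\<^bsub>G\<^esub> H. \<sigma> C \<in> C) \<and>
     \<sigma> H = \<one>\<^bsub>G\<^esub> \<and>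
     (\<forall>C \<in> lcosets\<^bsub>G\<^esub> H. \<forall>D \<in> lcosets\<^bsub>G\<^esub> H.
        \<exists>!z. z \<in> \<sigma> ` (lcosets\<^bsub>G\<^esub> H) \<and> z <#\<^bsub>G\<^esub> C = D)"

definition exp_m :: "real \<Rightarrow> (mat2 set \<times> mat2 set) set" where
  "exp_m lam = {(pexp X, pexp (lam *\<^sub>R X)) | X. X \<in> sl2}"

end

theory Submission
  imports Defs
begin

text \<open>The left coset (A, B)H of the diagonal is {(AM, BM) | M \<in> SL_2}; the pair (X, Y) maps it to
  (XA, YB)H, and it is unchanged when A and B are multiplied on the right by a common Q. Two distinct
  elements of the image of a sharply transitive section can never move one coset to the same coset.
  Since exp X = 1 + X for nilpotent X, exp(m_\<lambda>) contains the pairs (u(t), u(\<lambda>t)) and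
  (v(t), v(\<lambda>t)) of upper and lower unipotent matrices, and two of them collide.
  For \<lambda> = r^2 > 0 the identity and (u(1), u(\<lambda>)) both fix the coset of (diag(1/r, r), 1), because
  diag(1/r, r) conjugates u(\<lambda>) into u(1). For \<lambda> = -s^2 < 0, (u(a), u(\<lambda>a)) and (v(b), v(\<lambda>b)) move
  the coset of (c, 1) to the same coset when u(a)\<inverse>v(b) c = -c u(\<lambda>a)\<inverse>v(\<lambda>b); comparing traces,
  2 - ab = -(2 - \<lambda>^2ab), forces ab(1 + \<lambda>^2) = 4, and then b = 2/s, c = [[s, -1], [0, 1/s]] work.
  The sign of PSL_2 is essential here.\<close>

lemma sharply_transitive_section_collision:
  assumes "sharply_transitive_section G H \<sigma>"
    and "C \<in> lcosets\<^bsub>G\<^esub> H" "(z1 <#\<^bsub>G\<^esub> C) \<in> lcosets\<^bsub>G\<^esub> H"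
    and "z1 \<in> \<sigma> ` (lcosets\<^bsub>G\<^esub> H)" "z2 \<in> \<sigma> ` (lcosets\<^bsub>G\<^esub> H)"
    and "z1 <#\<^bsub>G\<^esub> C = z2 <#\<^bsub>G\<^esub> C"
  shows "z1 = z2"
  using assms unfolding sharply_transitive_section_def by metis

definition M2 :: "real \<Rightarrow> real \<Rightarrow> real \<Rightarrow> real \<Rightarrow> mat2" where
  "M2 a b c d = (\<chi> i j. if i = 1 then (if j = 1 then a else b) else (if j = 1 then c else d))"

lemma M2_eq_iff: "M2 a b c d = M2 a' b' c' d' \<longleftrightarrow> a = a' \<and> b = b' \<and> c = c' \<and> d = d'"
  by (auto simp: vec_eq_iff forall_2 M2_def)

lemma M2_mult: "M2 a b c d ** M2 e f g h = M2 (a*e+b*g) (a*f+b*h) (c*e+d*g) (c*f+d*h)"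
  by (simp add: vec_eq_iff forall_2 M2_def matrix_matrix_mult_def sum_2)

lemma M2_one: "mat 1 = M2 1 0 0 1"
  by (simp add: vec_eq_iff forall_2 M2_def mat_def)

lemma M2_zero: "0 = M2 0 0 0 0"
  by (simp add: vec_eq_iff forall_2 M2_def)

lemma M2_uminus: "- M2 a b c d = M2 (-a) (-b) (-c) (-d)"
  by (simp add: vec_eq_iff forall_2 M2_def)

lemma M2_add: "M2 a b c d + M2 e f g h = M2 (a+e) (b+f) (c+g) (d+h)"
  by (simp add: vec_eq_iff forall_2 M2_def)

lemma M2_scaleR: "r *\<^sub>R M2 a b c d = M2 (r*a) (r*b) (r*c) (r*d)"
  by (simp add: vec_eq_iff forall_2 M2_def)

lemma det_M2: "det (M2 a b c d) = a*d - b*c"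
  by (simp add: det_2 M2_def)

lemma trace_M2: "trace (M2 a b c d) = a + d"
  by (simp add: trace_def sum_2 M2_def)

lemma M2_in_SL2: "a*d - b*c = 1 \<Longrightarrow> M2 a b c d \<in> SL2"
  by (simp add: SL2_def det_M2)

lemma mexp_nilpotent:
  assumes "X ** X = 0"
  shows "mexp X = mat 1 + X"
proof -
  have vanish: "mpow X (Suc (Suc m)) = 0" for m
    using assms by (simp add: matrix_mul_assoc)
  have "mpow X n = 0" if "n \<notin> {0, 1}" for n
  proof -
    from that have "n = Suc (Suc (n - 2))"
      by auto
    with vanish show ?thesis
      by metis
  qed
  then have "(\<lambda>n. (1 / fact n) *\<^sub>R mpow X n) sums (\<Sum>n\<in>{0,1}. (1 / fact n) *\<^sub>R mpow X n)"
    by (intro sums_finite) auto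
  then show ?thesis
    unfolding mexp_def by (simp add: sums_iff matrix_mul_rid)
qed

lemma nilpotent_in_exp_m:
  assumes "X ** X = 0" "trace X = 0"
  shows "(psl_class (mat 1 + X), psl_class (mat 1 + lam *\<^sub>R X)) \<in> exp_m lam"
proof -
  have "(lam *\<^sub>R X) ** (lam *\<^sub>R X) = 0"
    using assms(1) by (metis matrix_scalar_ac scalar_matrix_assoc scaleR_zero_right)
  then have "(pexp X, pexp (lam *\<^sub>R X)) = (psl_class (mat 1 + X), psl_class (mat 1 + lam *\<^sub>R X))"
    using assms by (simp add: pexp_def mexp_nilpotent)
  moreover have "X \<in> sl2"
    using assms by (simp add: sl2_def)
  ultimately show ?thesis
    unfolding exp_m_def by blast
qed

lemma SL2_inverse:
  assumes "Q \<in> SL2"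
  obtains Q' where "Q' \<in> SL2" "Q ** Q' = mat 1"
proof -
  from assms have "invertible Q"
    by (simp add: SL2_def invertible_det_nz)
  then obtain Q' where Q': "Q ** Q' = mat 1"
    unfolding invertible_def by blast
  then have "det Q * det Q' = 1"
    by (metis det_I det_mul)
  with assms Q' show ?thesis
    using that by (simp add: SL2_def)
qed

lemma psl_class_eq_iff: "psl_class A = psl_class B \<longleftrightarrow> B = A \<or> B = - A"
  by (auto simp: psl_class_def doubleton_eq_iff)

lemma matrix_mult_uminus: "(- A) ** (B::mat2) = - (A ** B)" "A ** (- B) = - (A ** B)"
  by (simp_all add: vec_eq_iff matrix_matrix_mult_def sum_negf)

lemma mult_PSL2: "mult PSL2 (psl_class A) (psl_class B) = psl_class (A ** B)"
  unfolding PSL2_def psl_class_def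
  by (auto simp: matrix_mult_uminus) (metis matrix_mult_uminus(1))

lemma carrier_GG: "carrier GG = carrier PSL2 \<times> carrier PSL2"
  by (simp add: GG_def DirProd_def)

lemma mult_GG: "mult GG (a, b) (c, d) = (mult PSL2 a c, mult PSL2 b d)"
  by (simp add: GG_def DirProd_def)

lemma l_coset_HH:
  "(psl_class A, psl_class B) <#\<^bsub>GG\<^esub> HH = {(psl_class (A ** M), psl_class (B ** M)) | M. M \<in> SL2}"
  unfolding l_coset_def HH_def
  by (auto simp: mult_GG PSL2_def mult_PSL2[unfolded PSL2_def, simplified])

lemma l_coset_HH_in_lcosets:
  "A \<in> SL2 \<Longrightarrow> B \<in> SL2 \<Longrightarrow> (psl_class A, psl_class B) <#\<^bsub>GG\<^esub> HH \<in> lcosets\<^bsub>GG\<^esub> HH"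
  unfolding LCOSETS_def carrier_GG by (auto simp: PSL2_def)

lemma l_coset_l_coset_HH:
  "(psl_class X, psl_class Y) <#\<^bsub>GG\<^esub> ((psl_class A, psl_class B) <#\<^bsub>GG\<^esub> HH)
     = (psl_class (X ** A), psl_class (Y ** B)) <#\<^bsub>GG\<^esub> HH"
  unfolding l_coset_HH unfolding l_coset_def
  by (auto simp: mult_GG mult_PSL2 matrix_mul_assoc)

lemma l_coset_HH_mult_right_subset:
  assumes "Q \<in> SL2"
  shows "(psl_class (A ** Q), psl_class (B ** Q)) <#\<^bsub>GG\<^esub> HH \<subseteq> (psl_class A, psl_class B) <#\<^bsub>GG\<^esub> HH"
proof
  fix x
  assume "x \<in> (psl_class (A ** Q), psl_class (B ** Q)) <#\<^bsub>GG\<^esub> HH"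
  then obtain M where "M \<in> SL2" "x = (psl_class (A ** (Q ** M)), psl_class (B ** (Q ** M)))"
    unfolding l_coset_HH by (auto simp: matrix_mul_assoc)
  moreover from \<open>M \<in> SL2\<close> assms have "Q ** M \<in> SL2"
    by (simp add: SL2_def det_mul)
  ultimately show "x \<in> (psl_class A, psl_class B) <#\<^bsub>GG\<^esub> HH"
    unfolding l_coset_HH by blast
qed

lemma l_coset_HH_mult_right:
  assumes "Q \<in> SL2"
  shows "(psl_class (A ** Q), psl_class (B ** Q)) <#\<^bsub>GG\<^esub> HH = (psl_class A, psl_class B) <#\<^bsub>GG\<^esub> HH"
proof -
  obtain Q' where Q': "Q' \<in> SL2" "Q ** Q' = mat 1"
    using assms by (rule SL2_inverse)
  then have "A ** Q ** Q' = A" "B ** Q ** Q' = B"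
    by (simp_all flip: matrix_mul_assoc add: matrix_mul_rid)
  then have "(psl_class A, psl_class B) <#\<^bsub>GG\<^esub> HH \<subseteq> (psl_class (A ** Q), psl_class (B ** Q)) <#\<^bsub>GG\<^esub> HH"
    using l_coset_HH_mult_right_subset[OF Q'(1), of "A ** Q" "B ** Q"] by (simp only:)
  with l_coset_HH_mult_right_subset[OF assms] show ?thesis
    by (rule equalityI)
qed

lemma exp_m_not_section_image_if_collision:
  assumes "(psl_class A1, psl_class B1) \<in> exp_m lam" "(psl_class A2, psl_class B2) \<in> exp_m lam"
    and "psl_class A1 \<noteq> psl_class A2"
    and "A1 ** c \<in> SL2" "B1 \<in> SL2" "c \<in> SL2" "Q \<in> SL2"
    and "psl_class (A2 ** c) = psl_class (A1 ** c ** Q)" "B2 = B1 ** Q"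
  shows "\<not> (\<exists>\<sigma>. sharply_transitive_section GG HH \<sigma> \<and> \<sigma> ` (lcosets\<^bsub>GG\<^esub> HH) = exp_m lam)"
proof
  assume "\<exists>\<sigma>. sharply_transitive_section GG HH \<sigma> \<and> \<sigma> ` (lcosets\<^bsub>GG\<^esub> HH) = exp_m lam"
  then obtain \<sigma> where \<sigma>: "sharply_transitive_section GG HH \<sigma>" "\<sigma> ` (lcosets\<^bsub>GG\<^esub> HH) = exp_m lam"
    by blast
  let ?C = "(psl_class c, psl_class (mat 1)) <#\<^bsub>GG\<^esub> HH"
  have C: "?C \<in> lcosets\<^bsub>GG\<^esub> HH"
    using assms(6) by (intro l_coset_HH_in_lcosets) (simp_all add: SL2_def)
  have D: "(psl_class A1, psl_class B1) <#\<^bsub>GG\<^esub> ?C \<in> lcosets\<^bsub>GG\<^esub> HH"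
    using assms(4,5) by (simp add: l_coset_l_coset_HH l_coset_HH_in_lcosets matrix_mul_rid)
  have "(psl_class A1, psl_class B1) <#\<^bsub>GG\<^esub> ?C = (psl_class (A1 ** c ** Q), psl_class (B1 ** Q)) <#\<^bsub>GG\<^esub> HH"
    using assms(7) by (simp add: l_coset_HH_mult_right l_coset_l_coset_HH matrix_mul_rid)
  also have "\<dots> = (psl_class A2, psl_class B2) <#\<^bsub>GG\<^esub> ?C"
    using assms(8,9) by (simp add: l_coset_l_coset_HH matrix_mul_rid)
  finally have "(psl_class A1, psl_class B1) = (psl_class A2, psl_class B2)"
    using sharply_transitive_section_collision[OF \<sigma>(1) C D] \<sigma>(2) assms(1,2) by simp
  with assms(3) show False
    by simp
qed

lemma upper_unipotent_in_exp_m: "(psl_class (M2 1 b 0 1), psl_class (M2 1 (lam * b) 0 1)) \<in> exp_m lam"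
  using nilpotent_in_exp_m[of "M2 0 b 0 0" lam]
  by (simp add: M2_mult M2_zero[symmetric] M2_one M2_add M2_scaleR trace_M2)

lemma lower_unipotent_in_exp_m: "(psl_class (M2 1 0 b 1), psl_class (M2 1 0 (lam * b) 1)) \<in> exp_m lam"
  using nilpotent_in_exp_m[of "M2 0 0 b 0" lam]
  by (simp add: M2_mult M2_zero[symmetric] M2_one M2_add M2_scaleR trace_M2)

lemma exp_m_not_section_image_if_pos:
  assumes "lam > 0"
  shows "\<not> (\<exists>\<sigma>. sharply_transitive_section GG HH \<sigma> \<and> \<sigma> ` (lcosets\<^bsub>GG\<^esub> HH) = exp_m lam)"
proof -
  define r where "r = sqrt lam"
  have r: "r > 0" "r * r = lam"
    using assms by (simp_all add: r_def)
  show ?thesis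
  proof (rule exp_m_not_section_image_if_collision)
    show "(psl_class (M2 1 0 0 1), psl_class (M2 1 0 0 1)) \<in> exp_m lam"
      using upper_unipotent_in_exp_m[of 0 lam] by simp
    show "(psl_class (M2 1 1 0 1), psl_class (M2 1 lam 0 1)) \<in> exp_m lam"
      using upper_unipotent_in_exp_m[of 1 lam] by simp
    show "psl_class (M2 1 0 0 1) \<noteq> psl_class (M2 1 1 0 1)"
      by (simp add: psl_class_eq_iff M2_uminus M2_eq_iff)
    show "M2 1 0 0 1 ** M2 (1/r) 0 0 r \<in> SL2" "M2 1 0 0 1 \<in> SL2" "M2 (1/r) 0 0 r \<in> SL2"
      "M2 1 lam 0 1 \<in> SL2"
      using r by (simp_all add: M2_mult M2_in_SL2)
    show "psl_class (M2 1 1 0 1 ** M2 (1/r) 0 0 r) = psl_class (M2 1 0 0 1 ** M2 (1/r) 0 0 r ** M2 1 lam 0 1)"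
      using r by (simp add: M2_mult M2_eq_iff field_simps flip: r(2))
    show "M2 1 lam 0 1 = M2 1 0 0 1 ** M2 1 lam 0 1"
      by (simp add: M2_mult)
  qed
qed

lemma exp_m_not_section_image_if_neg:
  assumes "lam < 0"
  shows "\<not> (\<exists>\<sigma>. sharply_transitive_section GG HH \<sigma> \<and> \<sigma> ` (lcosets\<^bsub>GG\<^esub> HH) = exp_m lam)"
proof -
  define s where "s = sqrt (- lam)"
  have s: "s > 0" "lam = - (s * s)"
    using assms by (simp_all add: s_def)
  define a where "a = 2 * s / (1 + lam\<^sup>2)"
  define b where "b = 2 / s"
  have "1 + lam\<^sup>2 > 0"
    by (simp add: add_pos_nonneg)
  then have a: "a * (1 + lam\<^sup>2) = 2 * s"
    unfolding a_def by simp
  show ?thesis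
  proof (rule exp_m_not_section_image_if_collision)
    show "(psl_class (M2 1 a 0 1), psl_class (M2 1 (lam * a) 0 1)) \<in> exp_m lam"
      by (rule upper_unipotent_in_exp_m)
    show "(psl_class (M2 1 0 b 1), psl_class (M2 1 0 (lam * b) 1)) \<in> exp_m lam"
      by (rule lower_unipotent_in_exp_m)
    show "psl_class (M2 1 a 0 1) \<noteq> psl_class (M2 1 0 b 1)"
      using s by (simp add: psl_class_eq_iff M2_uminus M2_eq_iff b_def)
    show "M2 1 a 0 1 ** M2 s (-1) 0 (1/s) \<in> SL2" "M2 1 (lam * a) 0 1 \<in> SL2" "M2 s (-1) 0 (1/s) \<in> SL2"
      "M2 (1 - lam\<^sup>2 * a * b) (- lam * a) (lam * b) 1 \<in> SL2"
      using s by (simp_all add: M2_mult M2_in_SL2 power2_eq_square algebra_simps)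
    show "psl_class (M2 1 0 b 1 ** M2 s (-1) 0 (1/s)) =
      psl_class (M2 1 a 0 1 ** M2 s (-1) 0 (1/s) ** M2 (1 - lam\<^sup>2 * a * b) (- lam * a) (lam * b) 1)"
      using s a unfolding psl_class_eq_iff b_def
      by (simp add: M2_mult M2_uminus M2_eq_iff field_simps power2_eq_square) algebra
    show "M2 1 0 (lam * b) 1 = M2 1 (lam * a) 0 1 ** M2 (1 - lam\<^sup>2 * a * b) (- lam * a) (lam * b) 1"
      by (simp add: M2_mult M2_eq_iff power2_eq_square algebra_simps)
  qed
qed

theorem proposition8:
  fixes lam :: real
  assumes "lam \<noteq> 0" and "lam \<noteq> 1"
  shows "\<not> (\<exists>\<sigma>. sharply_transitive_section GG HH \<sigma> \<and>
               \<sigma> ` (lcosets\<^bsub>GG\<^esub> HH) = exp_m lam)"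
proof (cases "lam > 0")
  case True
  then show ?thesis
    by (rule exp_m_not_section_image_if_pos)
next
  case False
  with assms(1) have "lam < 0"
    by simp
  then show ?thesis
    by (rule exp_m_not_section_image_if_neg)
qed

end
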